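(* Let $t\geq 1$ and let $C=\{a_1,\ldots,a_m\}$ be a fan grounded by a curve $\gamma=\gamma_1\cup\cdots\cup\gamma_m$. If each $a_i$ intersects $\gamma$ in at most $t$ points, then there is a subfan $C'=\{a_{i_1},\ldots,a_{i_r}\}\subseteq C$ with $i_1<\cdots<i_r$ and $r=\lfloor\log_{t+1}m\rfloor$ that is grounded by a subcurve $\gamma'=\gamma'_1\cup\cdots\cup\gamma'_r\subseteq\gamma$ such that (1) $\gamma'_j\supseteq\gamma_{i_j}$ for $1\leq j\leq r$, and (2) $a_{i_j}$ intersects $\gamma'$ only within $\gamma'_1\cup\cdots\cup\gamma'_j$ for $1\leq j\leq r$.
   Context: All curves are simple; no two curves are tangent (a shared interior point is a proper crossing). A fan with apex $v$ is a collection of curves with common endpoint $v$. Let $\gamma$ be a curve with endpoints $p,q$, partitioned into subcurves $\gamma_1,\ldots,\gamma_m$ appearing in this order along $\gamma$ from $p$ to $q$ (consecutive pieces sharing an endpoint). A fan $C=\{a_1,\ldots,a_m\}$ with apex $v$ is grounded by $\gamma_1\cup\cdots\cup\gamma_m$ if $v\notin\gamma$ and each $a_i$ has its other endpoint on $\gamma_i$. It is well-grounded by $\gamma_1\cup\cdots\cup\gamma_m$ if in addition each $a_i$ intersects $\gamma$ only within $\gamma_i$. *)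

theory Defs
  imports "HOL-Analysis.Analysis"
begin

text \<open>Curves in the plane are arcs (continuous injective maps on [0,1]) into the complex
plane. A subcurve of an arc g is the image of a parameter subinterval.\<close>

definition subarc :: "(real \<Rightarrow> complex) \<Rightarrow> real \<Rightarrow> real \<Rightarrow> complex set" where
  "subarc g x y = g ` {x..y}"

end

theory Submission
  imports Defs
begin

text \<open>
  Induction on r: among any (t + 1)^r curves of the fan one finds r of them with the required
  nested grounding. Since the leftmost curve a_i ends on its own piece, it meets \<gamma> in at most
  t - 1 points beyond that piece. At most t - 1 of the other pieces contain such a point; grouping
  the remaining pieces by the number of these points to their left gives at most t groups, so one
  group J has (t + 1)^(r-1) pieces, and the stretch of \<gamma> spanned by J is missed by a_i. By
  induction J contains a nested subfan inside that stretch. Prepend a_i, whose new piece runs from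
  the start of its own piece to the start of the stretch: a_i meets the new \<gamma>' only in this
  first piece, and extending \<gamma>' to the left does not affect the conditions for the other curves.
\<close>

lemma subarc_mono: "x' \<le> x \<Longrightarrow> y \<le> y' \<Longrightarrow> subarc g x y \<subseteq> subarc g x' y'"
  unfolding subarc_def by auto

lemma subarc_subset_path_image: "0 \<le> x \<Longrightarrow> y \<le> 1 \<Longrightarrow> subarc g x y \<subseteq> path_image g"
  unfolding subarc_def path_image_def by auto

lemma subarc_Un: "x \<le> y \<Longrightarrow> y \<le> z \<Longrightarrow> subarc g x z = subarc g x y \<union> subarc g y z"
  unfolding subarc_def by (metis image_Un ivl_disj_un_two_touch(4))

lemma subarc_hits_extend_left:
  assumes "x \<le> y" "y \<le> z" "z \<le> w" "S \<inter> subarc g y w \<subseteq> subarc g y z"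
  shows "S \<inter> subarc g x w \<subseteq> subarc g x z"
proof -
  have "subarc g x w = subarc g x y \<union> subarc g y w"
    using assms(1-3) by (intro subarc_Un) auto
  moreover have "subarc g x y \<subseteq> subarc g x z" "subarc g y z \<subseteq> subarc g x z"
    using assms(1,2) by (simp_all add: subarc_mono)
  ultimately show ?thesis using assms(4) by blast
qed

lemma subarc_hits_before_gap:
  assumes "x \<le> y" and gap: "\<And>\<tau>. y < \<tau> \<Longrightarrow> \<tau> \<le> w \<Longrightarrow> g \<tau> \<notin> S"
  shows "S \<inter> subarc g x w \<subseteq> subarc g x y"
proof
  fix p assume "p \<in> S \<inter> subarc g x w"
  then obtain \<tau> where "p = g \<tau>" "x \<le> \<tau>" "\<tau> \<le> w" "g \<tau> \<in> S" unfolding subarc_def by auto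
  then have "\<tau> \<le> y" using gap by force
  then show "p \<in> subarc g x y" using \<open>p = g \<tau>\<close> \<open>x \<le> \<tau>\<close> unfolding subarc_def by auto
qed

lemma subarc_subset_UN_pieces:
  fixes u :: "nat \<Rightarrow> real"
  assumes "mono_on {0..n} u" "1 \<le> j" "j \<le> n"
  shows "subarc g (u 0) (u j) \<subseteq> (\<Union>k\<in>{1..j}. subarc g (u (k - 1)) (u k))"
  using assms(2,3)
proof (induction j rule: dec_induct)
  case base
  then show ?case by auto
next
  case (step j)
  have "subarc g (u 0) (u (Suc j)) = subarc g (u 0) (u j) \<union> subarc g (u j) (u (Suc j))"
    using step.prems by (intro subarc_Un mono_onD[OF assms(1)]) auto
  then show ?case using step.IH step.prems by force
qed

lemma strict_mono_on_prepend:
  assumes "strict_mono_on {k..n} f" "\<And>j. j \<in> {k..n} \<Longrightarrow> x < f j"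
  shows "strict_mono_on {k..Suc n} (\<lambda>j. if j = k then x else f (j - 1))"
proof (rule strict_mono_onI)
  fix i j assume "i \<in> {k..Suc n}" "j \<in> {k..Suc n}" "i < j"
  then have "j - 1 \<in> {k..n}" by auto
  show "(if i = k then x else f (i - 1)) < (if j = k then x else f (j - 1))"
  proof (cases "i = k")
    case True
    then show ?thesis using \<open>i < j\<close> \<open>j - 1 \<in> {k..n}\<close> assms(2) by auto
  next
    case False
    then have "i - 1 \<in> {k..n}" "i - 1 < j - 1" using \<open>i \<in> {k..Suc n}\<close> \<open>i < j\<close> by auto
    then show ?thesis
      using False \<open>i < j\<close> \<open>j - 1 \<in> {k..n}\<close> strict_mono_onD[OF assms(1)] by auto
  qed
qed

lemma power_floor_log_le:
  fixes b k :: nat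
  assumes "2 \<le> b" "0 < k"
  shows "b ^ nat \<lfloor>log b k\<rfloor> \<le> k"
proof -
  have "0 \<le> log b k" using assms by simp
  then have "\<lfloor>log b k\<rfloor> = int (nat \<lfloor>log b k\<rfloor>)" by simp
  then show ?thesis using floor_log_nat_eq_powr_iff[OF assms] by blast
qed

lemma mult_power_le_power_Suc_minus_1:
  fixes c t n :: nat
  assumes "c \<le> t"
  shows "c * (t + 1) ^ n \<le> (t + 1) ^ Suc n - 1"
proof -
  have "c * (t + 1) ^ n \<le> t * (t + 1) ^ n" using assms by simp
  moreover have "(t + 1) ^ Suc n = (t + 1) ^ n + t * (t + 1) ^ n" "1 \<le> (t + 1) ^ n" by simp_all
  ultimately show ?thesis by linarith
qed

lemma finite_arc_parameters:
  assumes "arc g" "finite (S \<inter> path_image g)"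
  shows "finite {\<tau>\<in>{0..1}. g \<tau> \<in> S}"
proof -
  have "g ` {\<tau>\<in>{0..1}. g \<tau> \<in> S} \<subseteq> S \<inter> path_image g"
    unfolding path_image_def by blast
  moreover have "inj_on g {\<tau>\<in>{0..1}. g \<tau> \<in> S}"
    using assms(1) unfolding arc_def by (rule inj_on_subset[OF conjunct2]) blast
  ultimately show ?thesis
    using assms(2) by (metis finite_imageD finite_subset)
qed

lemma card_hits_after_finish_less:
  assumes "arc g" and fin: "finite (path_image c \<inter> path_image g)"
    and finish: "pathfinish c \<in> subarc g x y" "0 \<le> x" "y \<le> 1"
  shows "card {\<tau>\<in>{0..1}. y < \<tau> \<and> g \<tau> \<in> path_image c} < card (path_image c \<inter> path_image g)"
proof -
  let ?P = "{\<tau>\<in>{0..1}. y < \<tau> \<and> g \<tau> \<in> path_image c}"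
  have inj: "inj_on g {0..1}" using \<open>arc g\<close> by (simp add: arc_def)
  obtain \<tau>\<^sub>0 where \<tau>\<^sub>0: "pathfinish c = g \<tau>\<^sub>0" "\<tau>\<^sub>0 \<in> {0..1}" "\<tau>\<^sub>0 \<le> y"
    using finish unfolding subarc_def by auto
  have "pathfinish c \<notin> g ` ?P"
  proof
    assume "pathfinish c \<in> g ` ?P"
    then obtain \<tau> where "\<tau> \<in> ?P" "g \<tau>\<^sub>0 = g \<tau>" using \<tau>\<^sub>0(1) by auto
    then have "\<tau>\<^sub>0 = \<tau>" using inj_onD[OF inj] \<tau>\<^sub>0(2) by blast
    then show False using \<open>\<tau> \<in> ?P\<close> \<tau>\<^sub>0(3) by simp
  qed
  moreover have "pathfinish c \<in> path_image g"
    using \<tau>\<^sub>0(1,2) unfolding path_image_def by simp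
  moreover have "g ` ?P \<subseteq> path_image c \<inter> path_image g"
    unfolding path_image_def by blast
  ultimately have "g ` ?P \<subset> path_image c \<inter> path_image g"
    using pathfinish_in_path_image[of c] by blast
  then have "card (g ` ?P) < card (path_image c \<inter> path_image g)"
    by (rule psubset_card_mono[OF fin])
  moreover have "card (g ` ?P) = card ?P"
    by (rule card_image, rule inj_on_subset[OF inj]) blast
  ultimately show ?thesis by simp
qed

lemma card_hit_intervals_le:
  fixes s :: "nat \<Rightarrow> 'a::linorder"
  assumes mono: "mono_on {0..m} s" and "I \<subseteq> {1..m}" "finite P"
  shows "card {i\<in>I. \<exists>p\<in>P. p \<in> {s (i - 1)<..s i}} \<le> card P"
proof -
  let ?H = "{i\<in>I. \<exists>p\<in>P. p \<in> {s (i - 1)<..s i}}"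
  let ?pt = "\<lambda>i. SOME p. p \<in> P \<and> p \<in> {s (i - 1)<..s i}"
  have pt: "?pt i \<in> P \<and> ?pt i \<in> {s (i - 1)<..s i}" if "i \<in> ?H" for i
    by (rule someI_ex) (use that in auto)
  have apart: "s i \<le> s (i' - 1)" if "i < i'" "i' \<in> I" for i i'
    using that assms(2) by (intro mono_onD[OF mono]) auto
  have "inj_on ?pt ?H"
  proof (rule inj_onI)
    fix i i' assume "i \<in> ?H" "i' \<in> ?H" "?pt i = ?pt i'"
    then show "i = i'"
      using pt[of i] pt[of i'] apart[of i i'] apart[of i' i]
      by (cases i i' rule: linorder_cases) auto
  qed
  then show ?thesis using pt assms(3) by (intro card_inj_on_le) auto
qed

lemma no_points_between_same_count:
  fixes s :: "nat \<Rightarrow> 'a::linorder"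
  assumes mono: "mono_on {0..m} s" and "finite P" "i \<le> i'" "i' \<le> m"
    and same: "card {p\<in>P. p \<le> s (i - 1)} = card {p\<in>P. p \<le> s (i' - 1)}"
    and last: "\<forall>p\<in>P. p \<notin> {s (i' - 1)<..s i'}"
  shows "\<forall>p\<in>P. p \<notin> {s (i - 1)<..s i'}"
proof (intro ballI notI)
  fix p assume "p \<in> P" "p \<in> {s (i - 1)<..s i'}"
  then have "p \<le> s (i' - 1)" using last by force
  moreover have "s (i - 1) \<le> s (i' - 1)"
    using assms(3,4) by (intro mono_onD[OF mono]) auto
  ultimately have "{p\<in>P. p \<le> s (i - 1)} \<subset> {p\<in>P. p \<le> s (i' - 1)}"
    using \<open>p \<in> P\<close> \<open>p \<in> {s (i - 1)<..s i'}\<close> by force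
  then have "card {p\<in>P. p \<le> s (i - 1)} < card {p\<in>P. p \<le> s (i' - 1)}"
    using \<open>finite P\<close> by (intro psubset_card_mono) auto
  then show False using same by simp
qed

lemma large_block_avoiding_points:
  fixes s :: "nat \<Rightarrow> 'a::linorder"
  assumes mono: "mono_on {0..m} s" and "finite P" and I: "I \<subseteq> {1..m}"
    and "0 < X" and large: "(card P + 1) * X \<le> card I"
  shows "\<exists>J \<subseteq> I. X \<le> card J \<and> (\<forall>p\<in>P. p \<notin> {s (Min J - 1)<..s (Max J)})"
proof -
  define Clear where "Clear = {i\<in>I. \<forall>p\<in>P. p \<notin> {s (i - 1)<..s i}}"
  define count where "count i = card {p\<in>P. p \<le> s (i - 1)}" for i
  have "finite I" using I finite_subset by blast
  have "I = Clear \<union> {i\<in>I. \<exists>p\<in>P. p \<in> {s (i - 1)<..s i}}"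
    unfolding Clear_def by blast
  then have "card I \<le> card Clear + card {i\<in>I. \<exists>p\<in>P. p \<in> {s (i - 1)<..s i}}"
    by (metis card_Un_le)
  then have clear: "card I \<le> card Clear + card P"
    using card_hit_intervals_le[OF mono I \<open>finite P\<close>] by linarith
  have "count \<in> Clear \<rightarrow> {0..card P}"
    unfolding count_def using \<open>finite P\<close> by (auto intro: card_mono)
  moreover have "finite Clear" using \<open>finite I\<close> unfolding Clear_def by simp
  ultimately obtain k where "card Clear \<le> card (count -` {k} \<inter> Clear) * (card P + 1)"
    using pigeonhole_card[of count Clear "{0..card P}"] by auto
  define J where "J = count -` {k} \<inter> Clear"
  have "X \<le> card J"
  proof (rule ccontr)
    assume "\<not> X \<le> card J"
    then have "(card J + 1) * (card P + 1) \<le> X * (card P + 1)"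
      by (intro mult_right_mono) auto
    moreover have "X * (card P + 1) \<le> card J * (card P + 1) + card P"
      using large clear \<open>card Clear \<le> _\<close> unfolding J_def by (simp add: mult.commute)
    ultimately show False by (simp add: algebra_simps)
  qed
  have "J \<subseteq> I" "finite J" unfolding J_def Clear_def using \<open>finite I\<close> by auto
  then have "J \<noteq> {}" using \<open>0 < X\<close> \<open>X \<le> card J\<close> by auto
  then have "Min J \<in> J" "Max J \<in> J" "Min J \<le> Max J" using \<open>finite J\<close> by auto
  have "\<forall>p\<in>P. p \<notin> {s (Min J - 1)<..s (Max J)}"
  proof (rule no_points_between_same_count[OF mono \<open>finite P\<close> \<open>Min J \<le> Max J\<close>])
    show "Max J \<le> m" using \<open>Max J \<in> J\<close> \<open>J \<subseteq> I\<close> I by auto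
    show "card {p\<in>P. p \<le> s (Min J - 1)} = card {p\<in>P. p \<le> s (Max J - 1)}"
      using \<open>Min J \<in> J\<close> \<open>Max J \<in> J\<close> unfolding J_def count_def by simp
    show "\<forall>p\<in>P. p \<notin> {s (Max J - 1)<..s (Max J)}"
      using \<open>Max J \<in> J\<close> unfolding J_def Clear_def by simp
  qed
  then show ?thesis using \<open>J \<subseteq> I\<close> \<open>X \<le> card J\<close> by blast
qed

lemma leftmost_curve_misses_large_block:
  fixes g :: "real \<Rightarrow> complex" and s :: "nat \<Rightarrow> real" and a :: "nat \<Rightarrow> real \<Rightarrow> complex"
  assumes "arc g" and s: "strict_mono_on {0..m} s" "s 0 = 0" "s m = 1"
    and fin: "\<And>i. i \<in> {1..m} \<Longrightarrow> pathfinish (a i) \<in> subarc g (s (i - 1)) (s i)"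
    and cnt: "\<And>i. i \<in> {1..m} \<Longrightarrow>
           finite (path_image (a i) \<inter> path_image g) \<and> card (path_image (a i) \<inter> path_image g) \<le> t"
    and I: "I \<subseteq> {1..m}" "(t + 1) ^ Suc n \<le> card I"
  shows "\<exists>J \<subseteq> I - {Min I}. (t + 1) ^ n \<le> card J
           \<and> (\<forall>\<tau>. s (Min J - 1) < \<tau> \<longrightarrow> \<tau> \<le> s (Max J) \<longrightarrow> g \<tau> \<notin> path_image (a (Min I)))"
proof -
  have "0 < (t + 1) ^ Suc n" by simp
  then have "0 < card I" using I(2) by linarith
  then have "finite I" "I \<noteq> {}" by (simp_all add: card_gt_0_iff)
  define i where "i = Min I"
  have "i \<in> I" using \<open>finite I\<close> \<open>I \<noteq> {}\<close> unfolding i_def by simp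
  then have i: "i \<in> {1..m}" using I(1) by auto
  have s_01: "s k \<in> {0..1}" if "k \<le> m" for k
    using that s strict_mono_on_less_eq[OF s(1), of 0 k] strict_mono_on_less_eq[OF s(1), of k m] by auto
  define P where "P = {\<tau>\<in>{0..1}. s i < \<tau> \<and> g \<tau> \<in> path_image (a i)}"
  have "finite {\<tau>\<in>{0..1}. g \<tau> \<in> path_image (a i)}"
    using finite_arc_parameters[OF \<open>arc g\<close>] cnt[OF i] by blast
  then have "finite P" unfolding P_def by (rule rev_finite_subset) auto
  have "card P < card (path_image (a i) \<inter> path_image g)"
    unfolding P_def using i cnt[OF i] fin[OF i] s_01
    by (intro card_hits_after_finish_less[OF \<open>arc g\<close>]) auto
  then have "card P + 1 \<le> t" using cnt[OF i] by linarith
  then have "(card P + 1) * (t + 1) ^ n \<le> card I - 1"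
    using mult_power_le_power_Suc_minus_1 I(2) by (meson diff_le_mono le_trans)
  then have large: "(card P + 1) * (t + 1) ^ n \<le> card (I - {i})"
    using \<open>i \<in> I\<close> \<open>finite I\<close> by simp
  have "I - {i} \<subseteq> {1..m}" "0 < (t + 1) ^ n" using I(1) by auto
  from large_block_avoiding_points[OF strict_mono_on_imp_mono_on[OF s(1)] \<open>finite P\<close> this large]
  obtain J where J: "J \<subseteq> I - {i}" "(t + 1) ^ n \<le> card J"
    and avoid: "\<forall>p\<in>P. p \<notin> {s (Min J - 1)<..s (Max J)}"
    by blast
  have "0 < card J" using J(2) \<open>0 < (t + 1) ^ n\<close> by linarith
  then have "J \<noteq> {}" "finite J" by (simp_all add: card_gt_0_iff)
  then have "Min J \<in> J" "Max J \<in> J" by simp_all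
  then have "i < Min J" "Min J - 1 \<le> m" "Max J \<le> m"
    using J(1) I(1) \<open>finite I\<close> unfolding i_def by (fastforce simp: order.strict_iff_order)+
  then have "s i \<le> s (Min J - 1)" "0 \<le> s (Min J - 1)" "s (Max J) \<le> 1"
    using i s_01 by (auto simp: strict_mono_on_less_eq[OF s(1)])
  have "g \<tau> \<notin> path_image (a i)" if "s (Min J - 1) < \<tau>" "\<tau> \<le> s (Max J)" for \<tau>
  proof
    assume "g \<tau> \<in> path_image (a i)"
    then have "\<tau> \<in> P" using that \<open>s i \<le> s (Min J - 1)\<close> \<open>0 \<le> s (Min J - 1)\<close> \<open>s (Max J) \<le> 1\<close>
      unfolding P_def by simp
    then show False using avoid that by simp
  qed
  then show ?thesis using J unfolding i_def by blast
qed

text \<open>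
  The subfan is a (idx 1), ..., a (idx n) and \<gamma>'_j is subarc g (u (j - 1)) (u j), so that
  \<gamma>'_1 \<union> ... \<union> \<gamma>'_j = subarc g (u 0) (u j). The window s (Min I - 1) .. s (Max I) keeps \<gamma>'
  within the pieces of the curves indexed by I.
\<close>

definition coarse_grounding ::
  "(nat \<Rightarrow> real) \<Rightarrow> nat set \<Rightarrow> nat \<Rightarrow> (nat \<Rightarrow> nat) \<Rightarrow> (nat \<Rightarrow> real) \<Rightarrow> bool" where
  "coarse_grounding s I n idx u \<longleftrightarrow>
     strict_mono_on {1..n} idx \<and> idx ` {1..n} \<subseteq> I \<and> strict_mono_on {0..n} u
     \<and> s (Min I - 1) \<le> u 0 \<and> u n \<le> s (Max I)
     \<and> (\<forall>j\<in>{1..n}. u (j - 1) \<le> s (idx j - 1) \<and> s (idx j) \<le> u j)"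

definition nested_hits ::
  "(real \<Rightarrow> complex) \<Rightarrow> (nat \<Rightarrow> real \<Rightarrow> complex) \<Rightarrow> nat \<Rightarrow> (nat \<Rightarrow> nat) \<Rightarrow> (nat \<Rightarrow> real) \<Rightarrow> bool"
  where
  "nested_hits g a n idx u \<longleftrightarrow>
     (\<forall>j\<in>{1..n}. path_image (a (idx j)) \<inter> subarc g (u 0) (u n) \<subseteq> subarc g (u 0) (u j))"

lemma coarse_grounding_0:
  assumes "mono_on {0..m} s" "finite I" "I \<noteq> {}" "I \<subseteq> {1..m}"
  shows "coarse_grounding s I 0 idx (\<lambda>_. s (Min I - 1))"
proof -
  have "Min I \<in> I" "Max I \<in> I" using assms(2,3) by auto
  then have "Min I \<le> Max I" "Max I \<le> m" using assms(2,4) by auto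
  then have "s (Min I - 1) \<le> s (Max I)" by (intro mono_onD[OF assms(1)]) auto
  then show ?thesis unfolding coarse_grounding_def by (auto simp: strict_mono_on_def)
qed

lemma coarse_grounding_extend:
  assumes s: "strict_mono_on {0..m} s" and I: "finite I" "I \<subseteq> {1..m}"
    and J: "J \<subseteq> I - {Min I}" "J \<noteq> {}" and cg: "coarse_grounding s J n idx u"
  shows "coarse_grounding s I (Suc n)
           (\<lambda>j. if j = 1 then Min I else idx (j - 1)) (\<lambda>j. if j = 0 then s (Min I - 1) else u (j - 1))"
    (is "coarse_grounding s I (Suc n) ?idx ?u")
proof -
  let ?i = "Min I"
  have idx: "strict_mono_on {1..n} idx" "\<And>j. j \<in> {1..n} \<Longrightarrow> idx j \<in> J"
    and u: "strict_mono_on {0..n} u" "s (Min J - 1) \<le> u 0" "u n \<le> s (Max J)"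
    and pieces: "\<And>j. j \<in> {1..n} \<Longrightarrow> u (j - 1) \<le> s (idx j - 1) \<and> s (idx j) \<le> u j"
    using cg unfolding coarse_grounding_def by auto
  have "finite J" using I J finite_subset by blast
  have "I \<noteq> {}" using J by auto
  then have "?i \<in> I" "Max I \<in> I" using I(1) by auto
  have later: "?i < k" if "k \<in> J" for k
    using that J I by (metis DiffE Min_le insertI1 le_neq_implies_less subsetD)
  have "Min J \<in> J" "Max J \<in> J" using \<open>finite J\<close> J by auto
  then have "1 \<le> ?i" "?i \<le> Min J - 1" "Min J \<le> m" "Max J \<le> Max I" "Max I \<le> m"
    using later[of "Min J"] \<open>?i \<in> I\<close> \<open>Max I \<in> I\<close> I J by auto
  then have "s (?i - 1) < s ?i" "s ?i \<le> s (Min J - 1)" "s (Max J) \<le> s (Max I)"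
    by (auto intro!: strict_mono_onD[OF s] simp: strict_mono_on_less_eq[OF s])
  have "strict_mono_on {1..Suc n} ?idx"
  proof (rule strict_mono_on_prepend[OF idx(1)])
    fix j assume "j \<in> {1..n}"
    then show "?i < idx j" using idx(2) later by blast
  qed
  moreover have "strict_mono_on {0..Suc n} ?u"
  proof (rule strict_mono_on_prepend[OF u(1)])
    fix j assume "j \<in> {0..n}"
    then have "u 0 \<le> u j" using u(1) by (auto simp: strict_mono_on_less_eq)
    then show "s (?i - 1) < u j" using \<open>s (?i - 1) < s ?i\<close> \<open>s ?i \<le> s (Min J - 1)\<close> u(2) by linarith
  qed
  moreover have per_j: "?idx j \<in> I \<and> ?u (j - 1) \<le> s (?idx j - 1) \<and> s (?idx j) \<le> ?u j"
    if "j \<in> {1..Suc n}" for j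
  proof (cases "j = 1")
    case True
    then show ?thesis using \<open>?i \<in> I\<close> \<open>s ?i \<le> s (Min J - 1)\<close> u(2) by simp
  next
    case False
    then have j: "j - 1 \<in> {1..n}" using that by auto
    have shift: "?idx j = idx (j - 1)" "?u (j - 1) = u (j - 1 - 1)" "?u j = u (j - 1)"
      using False that by auto
    show ?thesis unfolding shift using idx(2)[OF j] pieces[OF j] J by auto
  qed
  moreover have "?idx ` {1..Suc n} \<subseteq> I" using per_j by blast
  moreover have "?u (Suc n) \<le> s (Max I)" using u(3) \<open>s (Max J) \<le> s (Max I)\<close> by simp
  ultimately show ?thesis unfolding coarse_grounding_def using per_j by simp
qed

lemma nested_hits_extend:
  fixes u :: "nat \<Rightarrow> real"
  assumes nh: "nested_hits g a n idx u" and u: "mono_on {0..n} u" "x \<le> u 0"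
    and gap: "\<And>\<tau>. u 0 < \<tau> \<Longrightarrow> \<tau> \<le> u n \<Longrightarrow> g \<tau> \<notin> path_image (a i)"
  shows "nested_hits g a (Suc n) (\<lambda>j. if j = 1 then i else idx (j - 1)) (\<lambda>j. if j = 0 then x else u (j - 1))"
    (is "nested_hits g a (Suc n) ?idx ?u")
proof -
  have u_bounds: "u 0 \<le> u j" "u j \<le> u n" if "j \<in> {0..n}" for j
    using that by (auto intro: mono_onD[OF u(1)])
  have first: "path_image (a i) \<inter> subarc g x (u n) \<subseteq> subarc g x (u 0)"
    using u(2) gap by (rule subarc_hits_before_gap)
  have rest: "path_image (a (idx j)) \<inter> subarc g x (u n) \<subseteq> subarc g x (u j)"
    if "j \<in> {1..n}" for j
  proof (rule subarc_hits_extend_left[OF u(2)])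
    show "u 0 \<le> u j" "u j \<le> u n" using u_bounds that by auto
    show "path_image (a (idx j)) \<inter> subarc g (u 0) (u n) \<subseteq> subarc g (u 0) (u j)"
      using nh that unfolding nested_hits_def by blast
  qed
  show ?thesis unfolding nested_hits_def
  proof
    fix j assume "j \<in> {1..Suc n}"
    then consider "j = 1" | "j - 1 \<in> {1..n}" "j \<noteq> 0" "j \<noteq> 1" by fastforce
    then show "path_image (a (?idx j)) \<inter> subarc g (?u 0) (?u (Suc n)) \<subseteq> subarc g (?u 0) (?u j)"
      by cases (simp_all add: first rest)
  qed
qed

lemma nested_subfan_exists:
  fixes g :: "real \<Rightarrow> complex" and s :: "nat \<Rightarrow> real" and a :: "nat \<Rightarrow> real \<Rightarrow> complex"
  assumes "arc g" and s: "strict_mono_on {0..m} s" "s 0 = 0" "s m = 1"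
    and "\<And>i. i \<in> {1..m} \<Longrightarrow> pathfinish (a i) \<in> subarc g (s (i - 1)) (s i)"
    and "\<And>i. i \<in> {1..m} \<Longrightarrow>
           finite (path_image (a i) \<inter> path_image g) \<and> card (path_image (a i) \<inter> path_image g) \<le> t"
    and "I \<subseteq> {1..m}" "(t + 1) ^ n \<le> card I"
  shows "\<exists>idx u. coarse_grounding s I n idx u \<and> nested_hits g a n idx u"
  using assms(7,8)
proof (induction n arbitrary: I)
  case 0
  then have "finite I" "I \<noteq> {}" by (auto intro: card_ge_0_finite)
  then show ?case
    using coarse_grounding_0[OF strict_mono_on_imp_mono_on[OF s(1)] _ _ "0.prems"(1)]
    unfolding nested_hits_def by blast
next
  case (Suc n)
  obtain J where J: "J \<subseteq> I - {Min I}" "(t + 1) ^ n \<le> card J"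
    and gap: "\<And>\<tau>. s (Min J - 1) < \<tau> \<Longrightarrow> \<tau> \<le> s (Max J) \<Longrightarrow> g \<tau> \<notin> path_image (a (Min I))"
    using leftmost_curve_misses_large_block[OF assms(1-6) Suc.prems] by blast
  have "0 < (t + 1) ^ n" "0 < (t + 1) ^ Suc n" by simp_all
  then have "0 < card I" "0 < card J" using Suc.prems(2) J(2) by linarith+
  then have "finite I" "J \<noteq> {}" by (simp_all add: card_gt_0_iff)
  have "J \<subseteq> {1..m}" using J(1) Suc.prems(1) by auto
  then obtain idx u where cg: "coarse_grounding s J n idx u" and nh: "nested_hits g a n idx u"
    using Suc.IH J(2) by blast
  let ?idx = "\<lambda>j. if j = 1 then Min I else idx (j - 1)"
  let ?u = "\<lambda>j. if j = 0 then s (Min I - 1) else u (j - 1)"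
  have cg': "coarse_grounding s I (Suc n) ?idx ?u"
    using coarse_grounding_extend[OF s(1) \<open>finite I\<close> Suc.prems(1) J(1) \<open>J \<noteq> {}\<close> cg] .
  then have "s (Min I - 1) \<le> u 0"
    unfolding coarse_grounding_def using strict_mono_onD[of "{0..Suc n}" ?u 0 1] by auto
  moreover have "mono_on {0..n} u" "s (Min J - 1) \<le> u 0" "u n \<le> s (Max J)"
    using cg strict_mono_on_imp_mono_on unfolding coarse_grounding_def by blast+
  ultimately have "nested_hits g a (Suc n) ?idx ?u"
    using gap by (intro nested_hits_extend[OF nh]) force+
  with cg' show ?case by blast
qed

theorem mainTheorem5:
  fixes g :: "real \<Rightarrow> complex" and s :: "nat \<Rightarrow> real" and m t :: nat
    and a :: "nat \<Rightarrow> real \<Rightarrow> complex" and v :: complex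
  assumes "t \<ge> 1" and "m \<ge> 1"
    and "arc g"
    and "strict_mono_on {0..m} s" and "s 0 = 0" and "s m = 1"
    and "v \<notin> path_image g"
    and "\<And>i. i \<in> {1..m} \<Longrightarrow> arc (a i)"
    and "\<And>i. i \<in> {1..m} \<Longrightarrow> pathstart (a i) = v"
    and "\<And>i. i \<in> {1..m} \<Longrightarrow> pathfinish (a i) \<in> subarc g (s (i - 1)) (s i)"
    and "\<And>i. i \<in> {1..m} \<Longrightarrow>
           finite (path_image (a i) \<inter> path_image g) \<and> card (path_image (a i) \<inter> path_image g) \<le> t"
  shows "\<exists>idx :: nat \<Rightarrow> nat. \<exists>u :: nat \<Rightarrow> real.
     let r = nat \<lfloor>log (real t + 1) (real m)\<rfloor> in
       strict_mono_on {1..r} idx \<and> idx ` {1..r} \<subseteq> {1..m}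
     \<and> strict_mono_on {0..r} u \<and> 0 \<le> u 0 \<and> u r \<le> 1
     \<and> v \<notin> subarc g (u 0) (u r)
     \<and> (\<forall>j \<in> {1..r}. pathstart (a (idx j)) = v
            \<and> pathfinish (a (idx j)) \<in> subarc g (u (j - 1)) (u j)
            \<and> subarc g (s (idx j - 1)) (s (idx j)) \<subseteq> subarc g (u (j - 1)) (u j)
            \<and> path_image (a (idx j)) \<inter> subarc g (u 0) (u r)
                \<subseteq> (\<Union>k \<in> {1..j}. subarc g (u (k - 1)) (u k)))"
  proof -
  define r where "r = nat \<lfloor>log (real t + 1) (real m)\<rfloor>"
  have "(t + 1) ^ r \<le> card {1..m}"
    using power_floor_log_le[of "t + 1" m] assms(1,2) unfolding r_def by (simp add: add.commute)
  then obtain idx u where "coarse_grounding s {1..m} r idx u" and hits: "nested_hits g a r idx u"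
    using nested_subfan_exists[OF assms(3-6,10,11) order.refl] by blast
  moreover have "Min {1..m} = 1" "Max {1..m} = m" using assms(2) by (intro Min_eqI Max_eqI; auto)+
  ultimately have idx: "strict_mono_on {1..r} idx" "idx ` {1..r} \<subseteq> {1..m}"
    and u: "strict_mono_on {0..r} u" "0 \<le> u 0" "u r \<le> 1"
    and pieces: "\<And>j. j \<in> {1..r} \<Longrightarrow> u (j - 1) \<le> s (idx j - 1) \<and> s (idx j) \<le> u j"
    using assms(5,6) unfolding coarse_grounding_def by auto
  have "v \<notin> subarc g (u 0) (u r)"
    using assms(7) subarc_subset_path_image[OF u(2,3)] by blast
  moreover have "pathstart (a (idx j)) = v
      \<and> pathfinish (a (idx j)) \<in> subarc g (u (j - 1)) (u j)
      \<and> subarc g (s (idx j - 1)) (s (idx j)) \<subseteq> subarc g (u (j - 1)) (u j)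
      \<and> path_image (a (idx j)) \<inter> subarc g (u 0) (u r)
          \<subseteq> (\<Union>k \<in> {1..j}. subarc g (u (k - 1)) (u k))" if "j \<in> {1..r}" for j
  proof -
    have "idx j \<in> {1..m}" using idx(2) that by blast
    moreover have "subarc g (s (idx j - 1)) (s (idx j)) \<subseteq> subarc g (u (j - 1)) (u j)"
      using pieces[OF that] by (simp add: subarc_mono)
    moreover have "subarc g (u 0) (u j) \<subseteq> (\<Union>k \<in> {1..j}. subarc g (u (k - 1)) (u k))"
      using that by (intro subarc_subset_UN_pieces[OF strict_mono_on_imp_mono_on[OF u(1)]]) auto
    ultimately show ?thesis using assms(9,10) hits that unfolding nested_hits_def by blast
  qed
  ultimately show ?thesis unfolding Let_def r_def[symmetric] using idx u by blast
qed

end
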